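(* Let $n\ge5$ and $S\subseteq V(C_n)$. Suppose (1) every gap of $S$ contains at most $3$ vertices, and at most one gap of $S$ contains $3$ vertices; and (2) if a gap of $S$ contains at least $2$ vertices, then its neighboring gaps contain at most $1$ vertex. Then $S$ is a distance-$1$ resolving set of $C_n$.
   Context: $C_n$ is the cycle on $n$ vertices. $d$ is the shortest-path distance and $d_1(x,y)=\min\{d(x,y),2\}$; $S$ is a distance-$1$ resolving set if for all distinct $x,y$ some $z\in S$ has $d_1(x,z)\ne d_1(y,z)$. For a set $M$ of at least two vertices of $C_n$ and distinct $u_i,u_j\in M$, let $P,P'$ be the two $u_i$–$u_j$ paths in $C_n$. If one of them, say $P$, contains no vertices of $M$ other than $u_i,u_j$, then $u_i,u_j$ are neighboring vertices of $M$ and $V(P)-\{u_i,u_j\}$ is a gap of $M$ (possibly empty). The two gaps determined by a vertex of $M$ and its two neighboring vertices of $M$ are called neighboring gaps. A set $M$ with $|M|=r$ has $r$ gaps. *)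

theory Defs
  imports Main
begin

text \<open>The cycle C_n has vertex set {0..<n}, vertex i adjacent to (i+1) mod n.\<close>

definition cyc_dist :: "nat \<Rightarrow> nat \<Rightarrow> nat \<Rightarrow> nat" where
  "cyc_dist n x y = min ((x + n - y) mod n) ((y + n - x) mod n)"

definition dist1 :: "nat \<Rightarrow> nat \<Rightarrow> nat \<Rightarrow> nat" where
  "dist1 n x y = min (cyc_dist n x y) 2"

definition dist1_resolving :: "nat \<Rightarrow> nat set \<Rightarrow> bool" where
  "dist1_resolving n S \<longleftrightarrow> S \<subseteq> {..<n} \<and>
     (\<forall>x<n. \<forall>y<n. x \<noteq> y \<longrightarrow> (\<exists>z\<in>S. dist1 n x z \<noteq> dist1 n y z))"

definition cw_step :: "nat \<Rightarrow> nat set \<Rightarrow> nat \<Rightarrow> nat" where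
  "cw_step n S u = (LEAST k. 0 < k \<and> (u + k) mod n \<in> S)"

definition next_in :: "nat \<Rightarrow> nat set \<Rightarrow> nat \<Rightarrow> nat" where
  "next_in n S u = (u + cw_step n S u) mod n"

definition gap :: "nat \<Rightarrow> nat set \<Rightarrow> nat \<Rightarrow> nat set" where
  "gap n S u = {(u + k) mod n | k. 0 < k \<and> k < cw_step n S u}"

end

theory Submission
  imports Defs "HOL-Number_Theory.Cong"
begin

text \<open>
  A vertex of S resolves any pair containing it, so only pairs x, y outside S matter, and for
  those the truncated distance to a vertex of S only records adjacency. Every vertex outside S
  lies in a gap of at most 3 vertices. If x has no neighbour in S, it is the centre of a 3-gap,
  so x and y together would need two 3-gaps. Otherwise x and y share a neighbour s in S and
  flank it; as n \<ge> 5, the vertex before x and the one after y are each adjacent to only one of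
  x, y, hence not in S. So both gaps at s have at least 2 vertices, which is excluded.
\<close>

definition cyc_adj :: "nat \<Rightarrow> nat \<Rightarrow> nat \<Rightarrow> bool" where
  "cyc_adj n x z \<longleftrightarrow> z = (x + 1) mod n \<or> x = (z + 1) mod n"

lemma cyc_adj_sym: "cyc_adj n x z \<longleftrightarrow> cyc_adj n z x"
  unfolding cyc_adj_def by blast

lemma mod_add_left_cancel: "(x + a) mod n = (x + b) mod n \<longleftrightarrow> a mod n = b mod n"
  for x a b n :: nat
  using cong_add_lcancel_nat unfolding cong_def .

lemma cyc_adj_add_iff:
  assumes "x < n"
  shows "cyc_adj n x ((x + d) mod n) \<longleftrightarrow> d mod n = 1 mod n \<or> (d + 1) mod n = 0"
proof -
  have "x = ((x + d) mod n + 1) mod n \<longleftrightarrow> (x + 0) mod n = (x + (d + 1)) mod n"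
    using assms by (simp add: mod_Suc_eq)
  then show ?thesis
    unfolding cyc_adj_def mod_add_left_cancel by auto
qed

lemma not_cyc_adj_add_3:
  assumes "x < n" "5 \<le> n"
  shows "\<not> cyc_adj n x ((x + 3) mod n)"
  using assms by (simp add: cyc_adj_add_iff)

lemma succ_mod_inj:
  fixes a b n :: nat
  assumes "a < n" "b < n" "(a + 1) mod n = (b + 1) mod n"
  shows "a = b"
  using assms cong_add_rcancel_nat cong_less_modulus_unique_nat unfolding cong_def by blast

lemma common_cyc_neighbour:
  assumes "x < n" "y < n" "x \<noteq> y" "cyc_adj n x s" "cyc_adj n y s"
  shows "s = (x + 1) mod n \<and> y = (x + 2) mod n \<or> s = (y + 1) mod n \<and> x = (y + 2) mod n"
  using assms succ_mod_inj[OF assms(1,2)] unfolding cyc_adj_def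
  by (auto simp: mod_Suc_eq)

lemma mod_less_twice: "a < 2 * n \<Longrightarrow> a mod n = (if a < n then a else a - n)"
  for a n :: nat
  by (simp add: le_mod_geq)

lemma dist1_eq_less:
  assumes "x < z" "z < n" "3 \<le> n"
  shows "dist1 n x z = (if cyc_adj n x z then 1 else 2)"
  using assms by (auto simp: dist1_def cyc_dist_def cyc_adj_def mod_less_twice min_def)

lemma dist1_eq:
  assumes "x < n" "z < n" "x \<noteq> z" "3 \<le> n"
  shows "dist1 n x z = (if cyc_adj n x z then 1 else 2)"
proof (cases "x < z")
  case False
  have "dist1 n x z = dist1 n z x"
    unfolding dist1_def cyc_dist_def by (simp add: min.commute)
  with False assms show ?thesis
    using dist1_eq_less[of z x n] by (simp add: cyc_adj_sym)
qed (use assms dist1_eq_less in auto)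

lemma dist1_resolvingI:
  assumes "3 \<le> n" "S \<subseteq> {..<n}"
    and separate: "\<And>x y. \<lbrakk>x < n; y < n; x \<noteq> y; x \<notin> S; y \<notin> S\<rbrakk>
      \<Longrightarrow> \<exists>z\<in>S. cyc_adj n x z \<noteq> cyc_adj n y z"
  shows "dist1_resolving n S"
  unfolding dist1_resolving_def
proof (intro conjI allI impI)
  fix x y assume xy: "x < n" "y < n" "x \<noteq> y"
  have dist1_self: "dist1 n v v = 0" for v
    by (simp add: dist1_def cyc_dist_def)
  show "\<exists>z\<in>S. dist1 n x z \<noteq> dist1 n y z"
  proof (cases "x \<in> S \<or> y \<in> S")
    case True
    then show ?thesis
    proof
      assume "x \<in> S"
      moreover have "dist1 n y x \<noteq> 0"
        using dist1_eq[OF xy(2,1)] xy(3) assms(1) by simp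
      ultimately show ?thesis
        using dist1_self by metis
    next
      assume "y \<in> S"
      moreover have "dist1 n x y \<noteq> 0"
        using dist1_eq[OF xy(1,2)] xy(3) assms(1) by simp
      ultimately show ?thesis
        using dist1_self by metis
    qed
  next
    case False
    then obtain z where z: "z \<in> S" "cyc_adj n x z \<noteq> cyc_adj n y z"
      using separate xy by blast
    then have "z < n" "x \<noteq> z" "y \<noteq> z"
      using False assms(2) by auto
    then have "dist1 n x z \<noteq> dist1 n y z"
      using z dist1_eq[OF xy(1) \<open>z < n\<close> _ assms(1)] dist1_eq[OF xy(2) \<open>z < n\<close> _ assms(1)] by auto
    with z(1) show ?thesis ..
  qed
qed (use assms in auto)

lemma
  assumes "u \<in> S" "S \<subseteq> {..<n}"
  shows cw_step_pos: "0 < cw_step n S u"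
    and cw_step_le: "cw_step n S u \<le> n"
    and cw_step_mem: "(u + cw_step n S u) mod n \<in> S"
proof -
  have witness: "0 < n \<and> (u + n) mod n \<in> S"
    using assms by auto
  show "0 < cw_step n S u" "(u + cw_step n S u) mod n \<in> S"
    unfolding cw_step_def using LeastI[of "\<lambda>k. 0 < k \<and> (u + k) mod n \<in> S", OF witness] by auto
  show "cw_step n S u \<le> n"
    unfolding cw_step_def using witness by (rule Least_le)
qed

lemma not_mem_before_cw_step:
  assumes "0 < k" "k < cw_step n S u"
  shows "(u + k) mod n \<notin> S"
  using assms not_less_Least unfolding cw_step_def by blast

lemma card_gap:
  assumes "u \<in> S" "S \<subseteq> {..<n}"
  shows "card (gap n S u) = cw_step n S u - 1"
proof -
  have "gap n S u = (\<lambda>k. (u + k) mod n) ` {0<..<cw_step n S u}"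
    unfolding gap_def by auto
  moreover have "inj_on (\<lambda>k. (u + k) mod n) {0<..<cw_step n S u}"
    using cw_step_le[OF assms] assms
    by (intro inj_onI) (auto simp: mod_less_twice split: if_splits)
  ultimately show ?thesis
    by (simp add: card_image)
qed

lemma two_le_card_gap:
  assumes "u \<in> S" "S \<subseteq> {..<n}" "(u + 1) mod n \<notin> S" "(u + 2) mod n \<notin> S"
  shows "2 \<le> card (gap n S u)"
proof -
  have "cw_step n S u \<noteq> 1" "cw_step n S u \<noteq> 2"
    using cw_step_mem[OF assms(1,2)] assms(3,4) by auto
  with cw_step_pos[OF assms(1,2)] show ?thesis
    unfolding card_gap[OF assms(1,2)] by linarith
qed

lemma exists_gap_containing:
  assumes "x < n" "x \<notin> S" "s \<in> S" "S \<subseteq> {..<n}"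
  shows "\<exists>w\<in>S. x \<in> gap n S w"
proof -
  define P where "P j \<longleftrightarrow> 0 < j \<and> (x + n - j) mod n \<in> S" for j
  define j where "j = (LEAST j. P j)"
  define j0 where "j0 = (if s \<le> x then x - s else x + n - s)"
  have "s < n" "s \<noteq> x"
    using assms by auto
  then have "P j0" "j0 < n"
    using assms(1,3) unfolding P_def j0_def by (auto simp: mod_less_twice)
  have "P j"
    unfolding j_def using \<open>P j0\<close> by (rule LeastI)
  have "j < n"
    using Least_le[of P, OF \<open>P j0\<close>] \<open>j0 < n\<close> unfolding j_def by linarith
  define w where "w = (x + n - j) mod n"
  have "w \<in> S"
    using \<open>P j\<close> unfolding P_def w_def by simp
  have x_eq: "x = (w + j) mod n"
    unfolding w_def using \<open>j < n\<close> assms(1) by (auto simp: mod_less_twice)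
  have not_mem: "(w + k) mod n \<notin> S" if "0 < k" "k < j" for k
  proof -
    have "\<not> P (j - k)"
      unfolding j_def by (rule not_less_Least) (use that in \<open>simp add: j_def\<close>)
    moreover have "(w + k) mod n = (x + n - (j - k)) mod n"
      unfolding w_def using \<open>j < n\<close> assms(1) that by (auto simp: mod_less_twice)
    ultimately show ?thesis
      using that unfolding P_def by simp
  qed
  have "cw_step n S w \<ge> j"
    using not_mem cw_step_pos[OF \<open>w \<in> S\<close> assms(4)] cw_step_mem[OF \<open>w \<in> S\<close> assms(4)]
    by (meson not_le)
  moreover have "cw_step n S w \<noteq> j"
    using cw_step_mem[OF \<open>w \<in> S\<close> assms(4)] x_eq assms(2) by auto
  ultimately have "x \<in> gap n S w"
    unfolding gap_def using x_eq \<open>P j\<close> P_def by auto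
  with \<open>w \<in> S\<close> show ?thesis ..
qed

lemma succ_mem_iff_gap_end:
  assumes "w \<in> S" "S \<subseteq> {..<n}" "0 < k" "k < cw_step n S w"
  shows "((w + k) mod n + 1) mod n \<in> S \<longleftrightarrow> k + 1 = cw_step n S w"
proof -
  have "((w + k) mod n + 1) mod n = (w + (k + 1)) mod n"
    by (simp add: mod_Suc_eq)
  moreover have "(w + (k + 1)) mod n \<notin> S" if "k + 1 \<noteq> cw_step n S w"
    using that assms(4) by (intro not_mem_before_cw_step) auto
  ultimately show ?thesis
    by (metis cw_step_mem[OF assms(1,2)])
qed

lemma gap_centre:
  assumes "x < n" "x \<notin> S" "s \<in> S" "S \<subseteq> {..<n}"
    and no_neighbour: "\<forall>z\<in>S. \<not> cyc_adj n x z"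
    and small_gaps: "\<forall>u\<in>S. card (gap n S u) \<le> 3"
  shows "\<exists>w\<in>S. card (gap n S w) = 3 \<and> x = (w + 2) mod n"
proof -
  obtain w k where w: "w \<in> S" "0 < k" "k < cw_step n S w" "x = (w + k) mod n"
    using exists_gap_containing[OF assms(1-4)] unfolding gap_def by blast
  have "k \<noteq> 1"
    using no_neighbour w unfolding cyc_adj_def by auto
  moreover have "k + 1 \<noteq> cw_step n S w"
    using no_neighbour succ_mem_iff_gap_end[OF w(1) assms(4) w(2,3)] w(4)
    unfolding cyc_adj_def by auto
  moreover have "cw_step n S w \<le> 4"
    using small_gaps w(1) card_gap[OF w(1) assms(4)] by fastforce
  ultimately have "k = 2" "cw_step n S w = 4"
    using w(2,3) by linarith+
  then show ?thesis
    using w card_gap[OF w(1) assms(4)] by auto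
qed

lemma flanked_mem_large_gaps:
  assumes "5 \<le> n" "S \<subseteq> {..<n}" "x < n" "x \<notin> S" "y \<notin> S" "s \<in> S"
    and s_eq: "s = (x + 1) mod n" and y_eq: "y = (x + 2) mod n"
    and same: "\<forall>z\<in>S. cyc_adj n x z \<longleftrightarrow> cyc_adj n y z"
  shows "2 \<le> card (gap n S s) \<and> (\<exists>w\<in>S. next_in n S w = s \<and> 2 \<le> card (gap n S w))"
proof
  have "(y + 1) mod n = (x + 3) mod n"
    unfolding y_eq mod_add_left_eq add.assoc by (simp add: eval_nat_numeral)
  then have "(y + 1) mod n \<notin> S"
    using same not_cyc_adj_add_3[OF assms(3,1)] unfolding cyc_adj_def by auto
  moreover have "(s + 1) mod n = y" "(s + 2) mod n = (y + 1) mod n"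
    unfolding s_eq y_eq mod_add_left_eq add.assoc by (simp_all add: eval_nat_numeral)
  ultimately show "2 \<le> card (gap n S s)"
    using two_le_card_gap[OF \<open>s \<in> S\<close> assms(2)] \<open>y \<notin> S\<close> by auto
next
  obtain w k where w: "w \<in> S" "0 < k" "k < cw_step n S w" "x = (w + k) mod n"
    using exists_gap_containing[OF assms(3,4,6,2)] unfolding gap_def by blast
  have step: "cw_step n S w = k + 1"
    using succ_mem_iff_gap_end[OF w(1) assms(2) w(2,3)] w(4) s_eq \<open>s \<in> S\<close> by auto
  have "next_in n S w = s"
    unfolding next_in_def step s_eq w(4) by (simp add: mod_Suc_eq)
  moreover have "k \<noteq> 1"
  proof
    assume "k = 1"
    then have "cyc_adj n x w"
      using w(4) unfolding cyc_adj_def by simp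
    moreover have "y = (w + 3) mod n"
      unfolding y_eq w(4) \<open>k = 1\<close> mod_add_left_eq add.assoc by (simp add: eval_nat_numeral)
    then have "\<not> cyc_adj n y w"
      using not_cyc_adj_add_3[of w n] w(1) assms(1,2) cyc_adj_sym by auto
    ultimately show False
      using same w(1) by blast
  qed
  then have "2 \<le> card (gap n S w)"
    using card_gap[OF w(1) assms(2)] step w(2) by simp
  ultimately show "\<exists>w\<in>S. next_in n S w = s \<and> 2 \<le> card (gap n S w)"
    using w(1) by blast
qed

lemma shared_S_neighbour_large_gaps:
  assumes "5 \<le> n" "S \<subseteq> {..<n}" "x < n" "y < n" "x \<noteq> y" "x \<notin> S" "y \<notin> S"
    and "s \<in> S" "cyc_adj n x s"
    and same: "\<forall>z\<in>S. cyc_adj n x z \<longleftrightarrow> cyc_adj n y z"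
  shows "2 \<le> card (gap n S s) \<and> (\<exists>w\<in>S. next_in n S w = s \<and> 2 \<le> card (gap n S w))"
proof -
  have "cyc_adj n y s"
    using same assms(8,9) by blast
  from common_cyc_neighbour[OF assms(3-5,9) this] show ?thesis
  proof (elim disjE conjE)
    assume "s = (x + 1) mod n" "y = (x + 2) mod n"
    with flanked_mem_large_gaps[OF assms(1,2,3,6,7,8)] same show ?thesis
      by blast
  next
    assume "s = (y + 1) mod n" "x = (y + 2) mod n"
    with flanked_mem_large_gaps[OF assms(1,2,4,7,6,8)] same show ?thesis
      by blast
  qed
qed

lemma two_le_card_three_gaps:
  assumes "finite S" "S \<subseteq> {..<n}" "s \<in> S" "x < n" "y < n" "x \<noteq> y" "x \<notin> S" "y \<notin> S"
    and "\<forall>z\<in>S. \<not> cyc_adj n x z" "\<forall>z\<in>S. \<not> cyc_adj n y z"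
    and small_gaps: "\<forall>u\<in>S. card (gap n S u) \<le> 3"
  shows "2 \<le> card {u\<in>S. card (gap n S u) = 3}"
proof -
  obtain w where "w \<in> S" "card (gap n S w) = 3" "x = (w + 2) mod n"
    using gap_centre[OF assms(4,7,3,2,9) small_gaps] by blast
  moreover obtain v where "v \<in> S" "card (gap n S v) = 3" "y = (v + 2) mod n"
    using gap_centre[OF assms(5,8,3,2,10) small_gaps] by blast
  ultimately have "{w, v} \<subseteq> {u\<in>S. card (gap n S u) = 3}" "w \<noteq> v"
    using assms(6) by auto
  then have "card {w, v} \<le> card {u\<in>S. card (gap n S u) = 3}"
    using assms(1) by (intro card_mono) auto
  with \<open>w \<noteq> v\<close> show ?thesis
    by simp
qed

theorem lemma3p3:
  fixes n :: nat and S :: "nat set"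
  assumes "n \<ge> 5"
    and "S \<subseteq> {..<n}"
    and "card S \<ge> 2"
    and "\<forall>u\<in>S. card (gap n S u) \<le> 3"
    and "card {u\<in>S. card (gap n S u) = 3} \<le> 1"
    and "\<forall>u\<in>S. card (gap n S u) \<ge> 2 \<longrightarrow>
           card (gap n S (next_in n S u)) \<le> 1 \<and>
           (\<forall>w\<in>S. next_in n S w = u \<longrightarrow> card (gap n S w) \<le> 1)"
  shows "dist1_resolving n S"
proof (rule dist1_resolvingI)
  fix x y assume xy: "x < n" "y < n" "x \<noteq> y" "x \<notin> S" "y \<notin> S"
  show "\<exists>z\<in>S. cyc_adj n x z \<noteq> cyc_adj n y z"
  proof (rule ccontr)
    assume "\<not> ?thesis"
    then have same: "\<forall>z\<in>S. cyc_adj n x z \<longleftrightarrow> cyc_adj n y z"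
      by blast
    show False
    proof (cases "\<exists>s\<in>S. cyc_adj n x s")
      case True
      then obtain s w where "s \<in> S" "2 \<le> card (gap n S s)"
        and "w \<in> S" "next_in n S w = s" "2 \<le> card (gap n S w)"
        using shared_S_neighbour_large_gaps[OF assms(1,2) xy] same by blast
      with assms(6) show False
        by fastforce
    next
      case False
      moreover obtain s0 where "s0 \<in> S" "finite S"
        using assms(3) card.infinite by force
      ultimately have "2 \<le> card {u\<in>S. card (gap n S u) = 3}"
        using two_le_card_three_gaps[OF _ assms(2) _ xy _ _ assms(4)] same by blast
      with assms(5) show False
        by simp
    qed
  qed
qed (use assms in auto)

end
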